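(* Let $G$ be a directed graph, and let $p\ge 2$ and $r\ge 1$ be integers. If $G$ is $p$-solvable, then the lexicographic product $(G,r)$ is $pr$-solvable.
   Context: All graphs are finite. A directed graph $D=(V,E)$ has arcs $E \subseteq \{(u,v)\in V^2 : u \neq v\}$; bidirectional pairs are allowed. An undirected graph is identified with the directed graph having both arcs $(u,v)$ and $(v,u)$ for each edge $\{u,v\}$. The in-neighbourhood of $v$ is $N^-(v)=\{u : (u,v)\in E\}$. For an integer $q\ge 2$ let $[q]=\{0,1,\dots,q-1\}$. A $D$-function over $[q]$ is a map $f=(f_v)_{v\in V}:[q]^V\to[q]^V$ such that each $f_v(x)$ depends only on $(x_u)_{u\in N^-(v)}$. The graph $D$ is $q$-solvable if there is a $D$-function $f$ over $[q]$ such that for every $x\in[q]^V$ there exists a vertex $v$ with $f_v(x)=x_v$. The lexicographic product $(D,r)$ of a directed graph $D=(V,E)$ with the clique $K_r$ is the directed graph with vertex set $V\times\{0,\dots,r-1\}$ in which $((u,a),(v,b))$ is an arc if and only if either $(u,v)\in E$, or $u=v$ and $a\ne b$. *)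

theory Defs
  imports Main "HOL-Library.FuncSet"
begin

definition digraph :: "'a set \<Rightarrow> ('a \<times> 'a) set \<Rightarrow> bool" where
  "digraph V E \<longleftrightarrow> finite V \<and> E \<subseteq> {(u, v). u \<in> V \<and> v \<in> V \<and> u \<noteq> v}"

definition in_nbhd :: "('a \<times> 'a) set \<Rightarrow> 'a \<Rightarrow> 'a set" where
  "in_nbhd E v = {u. (u, v) \<in> E}"

definition configs :: "'a set \<Rightarrow> nat \<Rightarrow> ('a \<Rightarrow> nat) set" where
  "configs V q = V \<rightarrow>\<^sub>E {..<q}"

definition is_dfunction :: "'a set \<Rightarrow> ('a \<times> 'a) set \<Rightarrow> nat \<Rightarrow> (('a \<Rightarrow> nat) \<Rightarrow> ('a \<Rightarrow> nat)) \<Rightarrow> bool" where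
  "is_dfunction V E q f \<longleftrightarrow>
     (\<forall>x \<in> configs V q. f x \<in> configs V q) \<and>
     (\<forall>v \<in> V. \<forall>x \<in> configs V q. \<forall>y \<in> configs V q.
        (\<forall>u \<in> in_nbhd E v. x u = y u) \<longrightarrow> f x v = f y v)"

definition solvable :: "'a set \<Rightarrow> ('a \<times> 'a) set \<Rightarrow> nat \<Rightarrow> bool" where
  "solvable V E q \<longleftrightarrow>
     (\<exists>f. is_dfunction V E q f \<and> (\<forall>x \<in> configs V q. \<exists>v \<in> V. f x v = x v))"

definition lex_vertices :: "'a set \<Rightarrow> nat \<Rightarrow> ('a \<times> nat) set" where
  "lex_vertices V r = V \<times> {..<r}"

definition lex_arcs :: "'a set \<Rightarrow> ('a \<times> 'a) set \<Rightarrow> nat \<Rightarrow> (('a \<times> nat) \<times> ('a \<times> nat)) set" where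
  "lex_arcs V E r = {((u, a), (v, b)). (u, a) \<in> V \<times> {..<r} \<and> (v, b) \<in> V \<times> {..<r} \<and>
       ((u, v) \<in> E \<or> (u = v \<and> a \<noteq> b))}"

end

theory Submission
  imports Defs
begin

text \<open>Write each value in [p r] as a pair of digits: a high digit x div r in [p] and a low digit
  x mod r in [r]. Summing the high digits over each clique {v} \<times> [r] gives a configuration of G,
  on which a winning G-function f is run; vertex (v, a) guesses its high digit as f_v minus the
  high digits of the rest of its clique (mod p), and its low digit as a minus the low digits of
  the rest of its clique (mod r). If f guesses correctly at v, then every member of the clique of
  v guesses its high digit correctly, and the member a equal to the low-digit sum of the clique
  mod r also guesses its low digit correctly.\<close>

definition guess_mod :: "nat \<Rightarrow> nat \<Rightarrow> nat \<Rightarrow> nat" where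
  "guess_mod q s t = nat ((int t - int s) mod int q)"

lemma guess_mod_less: "q > 0 \<Longrightarrow> guess_mod q s t < q"
  unfolding guess_mod_def by (simp add: nat_less_iff)

lemma guess_mod_add:
  assumes "x < q"
  shows "guess_mod q s ((x + s) mod q) = x"
proof -
  have "(int ((x + s) mod q) - int s) mod int q = ((int x + int s) mod int q - int s) mod int q"
    by (simp add: zmod_int)
  also have "\<dots> = int x mod int q" by (simp add: mod_diff_left_eq)
  finally show ?thesis unfolding guess_mod_def using assms by simp
qed

lemma digits_less:
  fixes d m p r :: nat
  assumes "d < p" and "m < r"
  shows "d * r + m < p * r"
proof -
  have "d * r + m < Suc d * r" using assms(2) by simp
  also have "\<dots> \<le> p * r" using assms(1) by (intro mult_le_mono1) simp
  finally show ?thesis .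
qed

definition high_digit_config :: "'a set \<Rightarrow> nat \<Rightarrow> nat \<Rightarrow> ('a \<times> nat \<Rightarrow> nat) \<Rightarrow> 'a \<Rightarrow> nat" where
  "high_digit_config V r p X = (\<lambda>v\<in>V. (\<Sum>b<r. X (v, b) div r) mod p)"

definition clique_rest_sum :: "nat \<Rightarrow> (nat \<Rightarrow> nat) \<Rightarrow> ('a \<times> nat \<Rightarrow> nat) \<Rightarrow> 'a \<Rightarrow> nat \<Rightarrow> nat" where
  "clique_rest_sum r g X v a = (\<Sum>b\<in>{..<r} - {a}. g (X (v, b)))"

definition lex_function ::
    "'a set \<Rightarrow> nat \<Rightarrow> nat \<Rightarrow> (('a \<Rightarrow> nat) \<Rightarrow> 'a \<Rightarrow> nat) \<Rightarrow> ('a \<times> nat \<Rightarrow> nat) \<Rightarrow> 'a \<times> nat \<Rightarrow> nat" where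
  "lex_function V r p f X = (\<lambda>(v, a)\<in>V \<times> {..<r}.
     guess_mod p (clique_rest_sum r (\<lambda>x. x div r) X v a) (f (high_digit_config V r p X) v) * r
     + guess_mod r (clique_rest_sum r (\<lambda>x. x mod r) X v a) a)"

lemma high_digit_config_in_configs: "p > 0 \<Longrightarrow> high_digit_config V r p X \<in> configs V p"
  unfolding high_digit_config_def configs_def by auto

lemma lex_function_in_configs:
  assumes "p > 0" and "r > 0"
  shows "lex_function V r p f X \<in> configs (lex_vertices V r) (p * r)"
  unfolding configs_def lex_vertices_def lex_function_def
  using digits_less guess_mod_less assms by auto

lemma clique_rest_sum_cong:
  assumes "\<And>b. b < r \<Longrightarrow> b \<noteq> a \<Longrightarrow> X (v, b) = Y (v, b)"
  shows "clique_rest_sum r g X v a = clique_rest_sum r g Y v a"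
  unfolding clique_rest_sum_def using assms by (intro sum.cong) auto

lemma lex_function_local:
  assumes "E \<subseteq> V \<times> V" and f: "is_dfunction V E p f" and "p > 0"
    and va: "(v, a) \<in> lex_vertices V r"
    and agree: "\<forall>w \<in> in_nbhd (lex_arcs V E r) (v, a). X w = Y w"
  shows "lex_function V r p f X (v, a) = lex_function V r p f Y (v, a)"
proof -
  have v: "v \<in> V" and a: "a < r" using va unfolding lex_vertices_def by auto
  have agree_arc: "X (u, b) = Y (u, b)" if "(u, v) \<in> E \<or> (u = v \<and> b \<noteq> a)" "b < r" for u b
  proof -
    have "(u, b) \<in> in_nbhd (lex_arcs V E r) (v, a)"
      using that v a assms(1) unfolding in_nbhd_def lex_arcs_def by auto
    then show ?thesis using agree by blast
  qed
  have "high_digit_config V r p X u = high_digit_config V r p Y u" if "u \<in> in_nbhd E v" for u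
    using that agree_arc unfolding in_nbhd_def high_digit_config_def by (auto intro!: sum.cong)
  then have "f (high_digit_config V r p X) v = f (high_digit_config V r p Y) v"
    using f v high_digit_config_in_configs[OF \<open>p > 0\<close>] unfolding is_dfunction_def by blast
  moreover have "clique_rest_sum r g X v a = clique_rest_sum r g Y v a" for g
    using agree_arc by (intro clique_rest_sum_cong) auto
  ultimately show ?thesis unfolding lex_function_def using v a by simp
qed

lemma is_dfunction_lex_function:
  assumes "E \<subseteq> V \<times> V" and "is_dfunction V E p f" and "p > 0" and "r > 0"
  shows "is_dfunction (lex_vertices V r) (lex_arcs V E r) (p * r) (lex_function V r p f)"
  unfolding is_dfunction_def
proof (intro conjI ballI impI)
  show "lex_function V r p f X \<in> configs (lex_vertices V r) (p * r)"
    for X :: "'a \<times> nat \<Rightarrow> nat"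
    using lex_function_in_configs assms(3,4) .
next
  fix w and X Y :: "'a \<times> nat \<Rightarrow> nat"
  assume "w \<in> lex_vertices V r" and "\<forall>u \<in> in_nbhd (lex_arcs V E r) w. X u = Y u"
  then show "lex_function V r p f X w = lex_function V r p f Y w"
    using lex_function_local[OF assms(1-3)] by (cases w) blast
qed

lemma lex_function_fixed_point:
  assumes "r > 0" and v: "v \<in> V" and X: "X \<in> configs (lex_vertices V r) (p * r)"
    and fixed: "f (high_digit_config V r p X) v = high_digit_config V r p X v"
  obtains a where "a < r" and "lex_function V r p f X (v, a) = X (v, a)"
proof
  define a where "a = (\<Sum>b<r. X (v, b) mod r) mod r"
  show a: "a < r" unfolding a_def using assms(1) by simp
  have "X (v, a) < p * r" using X v a unfolding configs_def lex_vertices_def by auto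
  then have high: "X (v, a) div r < p" by (simp add: less_mult_imp_div_less)
  have split: "(\<Sum>b<r. g (X (v, b))) = g (X (v, a)) + clique_rest_sum r g X v a" for g
    unfolding clique_rest_sum_def using a by (simp add: sum.remove)
  have "f (high_digit_config V r p X) v
      = (X (v, a) div r + clique_rest_sum r (\<lambda>x. x div r) X v a) mod p"
    using fixed v split[of "\<lambda>x. x div r"] unfolding high_digit_config_def by simp
  then have high_digit:
    "guess_mod p (clique_rest_sum r (\<lambda>x. x div r) X v a) (f (high_digit_config V r p X) v)
      = X (v, a) div r"
    using guess_mod_add[OF high] by simp
  have low_digit: "guess_mod r (clique_rest_sum r (\<lambda>x. x mod r) X v a) a = X (v, a) mod r"
  proof -
    have "a = (X (v, a) mod r + clique_rest_sum r (\<lambda>x. x mod r) X v a) mod r"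
      using split[of "\<lambda>x. x mod r"] unfolding a_def by simp
    then have "guess_mod r (clique_rest_sum r (\<lambda>x. x mod r) X v a) a
        = guess_mod r (clique_rest_sum r (\<lambda>x. x mod r) X v a)
            ((X (v, a) mod r + clique_rest_sum r (\<lambda>x. x mod r) X v a) mod r)"
      by (rule arg_cong)
    also have "\<dots> = X (v, a) mod r" using assms(1) by (simp add: guess_mod_add)
    finally show ?thesis .
  qed
  have "lex_function V r p f X (v, a)
      = guess_mod p (clique_rest_sum r (\<lambda>x. x div r) X v a) (f (high_digit_config V r p X) v) * r
        + guess_mod r (clique_rest_sum r (\<lambda>x. x mod r) X v a) a"
    unfolding lex_function_def using v a by simp
  also have "\<dots> = X (v, a)" unfolding high_digit low_digit by (rule div_mult_mod_eq)
  finally show "lex_function V r p f X (v, a) = X (v, a)" .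
qed

theorem lemma2:
  fixes V :: "'a set" and E :: "('a \<times> 'a) set" and p r :: nat
  assumes "digraph V E" and "p \<ge> 2" and "r \<ge> 1"
    and "solvable V E p"
  shows "solvable (lex_vertices V r) (lex_arcs V E r) (p * r)"
proof -
  obtain f where f: "is_dfunction V E p f" and wins: "\<forall>x \<in> configs V p. \<exists>v \<in> V. f x v = x v"
    using assms(4) unfolding solvable_def by blast
  have "E \<subseteq> V \<times> V" and "p > 0" and "r > 0" using assms(1-3) unfolding digraph_def by auto
  have "\<exists>w \<in> lex_vertices V r. lex_function V r p f X w = X w"
    if X: "X \<in> configs (lex_vertices V r) (p * r)"
    for X :: "'a \<times> nat \<Rightarrow> nat"
  proof -
    obtain v where "v \<in> V" and "f (high_digit_config V r p X) v = high_digit_config V r p X v"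
      using wins high_digit_config_in_configs[OF \<open>p > 0\<close>] by blast
    then obtain a where "a < r" and "lex_function V r p f X (v, a) = X (v, a)"
      using lex_function_fixed_point[OF \<open>r > 0\<close> _ X] by blast
    then show ?thesis using \<open>v \<in> V\<close> unfolding lex_vertices_def by blast
  qed
  then show ?thesis
    unfolding solvable_def
    using is_dfunction_lex_function[OF \<open>E \<subseteq> V \<times> V\<close> f \<open>p > 0\<close> \<open>r > 0\<close>] by blast
qed

end
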